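(* Assume (in $V$) $\mathfrak b=\aleph_1$ with the family $\{g_\alpha:\alpha<\omega_1\}$ fixed as below. Let $X\subseteq{}^\omega 2$, $X\in V$, with $|X|\ge\aleph_1$, let $G=\langle X\rangle$ be the subgroup generated by $X$, and let $\bar{\mathcal T}\in V$ be a $G$-matrix with $\mathcal T=\bigcup_\alpha\mathcal T_\alpha$. Let $\dot z$ be a Cohen-forcing ($\mathbb C$-)name such that the trivial condition forces $\dot z\in{}^\omega 2\setminus V$. Then there is $x\in X$ such that the trivial condition forces $\dot z\notin x+[T]$ for all $T\in\mathcal T$.
   Context: ${}^\omega 2$ is the Cantor space with bitwise addition modulo $2$. $\mathbb S$ is the set of perfect subtrees of ${}^{<\omega}2$ ordered by inclusion; $[T]$ is the set of branches of $T$ (evaluated in the extension); for $x\in{}^\omega 2$, $x+T=\{\sigma+x\restriction|\sigma|:\sigma\in T\}$. A node $\sigma\in T$ is splitting if $\sigma^\frown0,\sigma^\frown1\in T$; $T$ is skew if for each $n$ there is at most one splitting node of length $n$. The splitting predecessors of $s\in T$ are the splitting nodes of $T$ properly contained in $s$; $h_T(n)=\min\{k:\text{some node of }T\text{ of length }k\text{ has }n\text{ splitting predecessors}\}$. $g\le^* f$ means $g(n)\le f(n)$ for almost all $n$. $\{g_\alpha:\alpha<\omega_1\}\subseteq{}^\omega\omega$ satisfies $\alpha<\beta\Rightarrow g_\alpha\le^* g_\beta$ and for every $f\in{}^\omega\omega$ there is $\alpha$ with $g_\alpha\not\le^* f$. $S$ is somewhere dense in $T$ if there is $s\in T$ with $T_s=\{t\in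 T:t\subseteq s\lor s\subseteq t\}\subseteq S$. A $G$-matrix is a sequence $\langle\mathcal T_\alpha:\alpha<\omega_1\rangle$ with $\mathcal T=\bigcup_\alpha\mathcal T_\alpha$ such that: (i) $\mathcal T\subseteq\mathbb S$ consists of skew trees; (ii) $g_\alpha\le^* h_T$ for all $T\in\mathcal T_\alpha$; (iii) for all $S\neq T$ in $\mathcal T_\alpha$ and all $x\in G$, $x+S$ and $T$ are incompatible; (iv) for every $T\in\mathbb S$ the set $\{(x,S)\in G\times\mathcal T: x+S\text{ is somewhere dense in }T\}$ is at most countable. *)

theory Defs
  imports Main "HOL-Library.Countable_Set" "HOL-Library.Sublist"
begin

type_synonym cantor = "nat \<Rightarrow> bool"
type_synonym seq = "bool list"

definition cadd :: "cantor \<Rightarrow> cantor \<Rightarrow> cantor" where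
  "cadd x y = (\<lambda>n. x n \<noteq> y n)"

definition czero :: cantor where "czero = (\<lambda>n. False)"

definition restr :: "cantor \<Rightarrow> nat \<Rightarrow> seq" where
  "restr x n = map x [0..<n]"

definition is_tree :: "seq set \<Rightarrow> bool" where
  "is_tree T \<longleftrightarrow> T \<noteq> {} \<and> (\<forall>\<sigma>\<in>T. \<forall>\<tau>. prefix \<tau> \<sigma> \<longrightarrow> \<tau> \<in> T)"

definition splitting :: "seq set \<Rightarrow> seq \<Rightarrow> bool" where
  "splitting T \<sigma> \<longleftrightarrow> \<sigma> \<in> T \<and> \<sigma> @ [False] \<in> T \<and> \<sigma> @ [True] \<in> T"

definition perfect_tree :: "seq set \<Rightarrow> bool" where
  "perfect_tree T \<longleftrightarrow> is_tree T \<and> (\<forall>\<sigma>\<in>T. \<exists>\<tau>. prefix \<sigma> \<tau> \<and> splitting T \<tau>)"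

definition branches :: "seq set \<Rightarrow> cantor set" where
  "branches T = {x. \<forall>n. restr x n \<in> T}"

definition shift :: "cantor \<Rightarrow> seq set \<Rightarrow> seq set" where
  "shift x T = (\<lambda>\<sigma>. map2 (\<noteq>) \<sigma> (restr x (length \<sigma>))) ` T"

definition skew :: "seq set \<Rightarrow> bool" where
  "skew T \<longleftrightarrow> (\<forall>\<sigma> \<tau>. splitting T \<sigma> \<and> splitting T \<tau> \<and> length \<sigma> = length \<tau> \<longrightarrow> \<sigma> = \<tau>)"

definition split_preds :: "seq set \<Rightarrow> seq \<Rightarrow> seq set" where
  "split_preds T s = {\<sigma>. splitting T \<sigma> \<and> strict_prefix \<sigma> s}"

definition hT :: "seq set \<Rightarrow> nat \<Rightarrow> nat" where
  "hT T n = (LEAST k. \<exists>s\<in>T. length s = k \<and> card (split_preds T s) = n)"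

definition compatible :: "seq set \<Rightarrow> seq set \<Rightarrow> bool" where
  "compatible S T \<longleftrightarrow> (\<exists>R. perfect_tree R \<and> R \<subseteq> S \<and> R \<subseteq> T)"

definition somewhere_dense :: "seq set \<Rightarrow> seq set \<Rightarrow> bool" where
  "somewhere_dense S T \<longleftrightarrow> (\<exists>s\<in>T. {t\<in>T. prefix t s \<or> prefix s t} \<subseteq> S)"

definition ae_le :: "(nat \<Rightarrow> nat) \<Rightarrow> (nat \<Rightarrow> nat) \<Rightarrow> bool" where
  "ae_le g f \<longleftrightarrow> (\<forall>\<^sub>F n in sequentially. g n \<le> f n)"

definition omega1_type :: "'i::wellorder itself \<Rightarrow> bool" where
  "omega1_type _ \<longleftrightarrow> \<not> countable (UNIV :: 'i set) \<and> (\<forall>a::'i. countable {b. b < a})"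

(* the fixed witness family for b = aleph_1 *)
definition b_family :: "('i::wellorder \<Rightarrow> nat \<Rightarrow> nat) \<Rightarrow> bool" where
  "b_family g \<longleftrightarrow> (\<forall>\<alpha> \<beta>. \<alpha> < \<beta> \<longrightarrow> ae_le (g \<alpha>) (g \<beta>)) \<and> (\<forall>f. \<exists>\<alpha>. \<not> ae_le (g \<alpha>) f)"

inductive_set gen_group :: "cantor set \<Rightarrow> cantor set" for X where
  zero: "czero \<in> gen_group X"
| step: "x \<in> X \<Longrightarrow> y \<in> gen_group X \<Longrightarrow> cadd x y \<in> gen_group X"

definition G_matrix :: "('i \<Rightarrow> nat \<Rightarrow> nat) \<Rightarrow> cantor set \<Rightarrow> ('i \<Rightarrow> seq set set) \<Rightarrow> bool" where
  "G_matrix g G Tm \<longleftrightarrow>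
     (\<forall>T\<in>\<Union>(range Tm). perfect_tree T \<and> skew T) \<and>
     (\<forall>\<alpha>. \<forall>T\<in>Tm \<alpha>. ae_le (g \<alpha>) (hT T)) \<and>
     (\<forall>\<alpha>. \<forall>S\<in>Tm \<alpha>. \<forall>T\<in>Tm \<alpha>. S \<noteq> T \<longrightarrow> (\<forall>x\<in>G. \<not> compatible (shift x S) T)) \<and>
     (\<forall>T. perfect_tree T \<longrightarrow>
        countable {(x, S). x \<in> G \<and> S \<in> \<Union>(range Tm) \<and> somewhere_dense (shift x S) T})"

(* Cohen forcing C: conditions are finite binary sequences, q <= p iff q extends p *)
definition cext :: "seq \<Rightarrow> seq \<Rightarrow> bool" where
  "cext q p \<longleftrightarrow> prefix p q"

(* A C-name for a subset of omega x 2 is a set of pairs (condition, (n,b)),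
   i.e. the name {((n,b)check, p) | (p,(n,b)) in N}.
   p forces "(n,b) in N", i.e. "z(n) = b": *)
definition forces_bit :: "(seq \<times> (nat \<times> bool)) set \<Rightarrow> seq \<Rightarrow> nat \<Rightarrow> bool \<Rightarrow> bool" where
  "forces_bit N p n b \<longleftrightarrow>
     (\<forall>q. cext q p \<longrightarrow> (\<exists>r p'. cext r q \<and> (p', (n, b)) \<in> N \<and> cext r p'))"

(* trivial condition forces "N is an element of 2^omega" *)
definition name_real :: "(seq \<times> (nat \<times> bool)) set \<Rightarrow> bool" where
  "name_real N \<longleftrightarrow>
     (\<forall>n p. \<exists>q b. cext q p \<and> forces_bit N q n b) \<and>
     (\<forall>n p. \<not> (forces_bit N p n True \<and> forces_bit N p n False))"

(* trivial condition forces "N is not in V", i.e. N differs from every ground real *)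
definition forces_new :: "(seq \<times> (nat \<times> bool)) set \<Rightarrow> bool" where
  "forces_new N \<longleftrightarrow>
     (\<forall>y::cantor. \<forall>p. \<exists>q n. cext q p \<and> forces_bit N q n (\<not> y n))"

(* trivial condition forces "N \<notin> [A]" for a ground tree A ([A] evaluated in the extension) *)
definition forces_notin_branches :: "(seq \<times> (nat \<times> bool)) set \<Rightarrow> seq set \<Rightarrow> bool" where
  "forces_notin_branches N A \<longleftrightarrow>
     (\<forall>p. \<exists>q \<sigma>. cext q p \<and> \<sigma> \<notin> A \<and> (\<forall>i<length \<sigma>. forces_bit N q i (\<sigma> ! i)))"

end

theory Submission imports Defs begin

text \<open>For a Cohen condition p let T_p be the tree of finite sequences that some extension of p
forces to be an initial segment of z. Since z is forced to be new, T_p is perfect, so by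
clause (iv) of the G-matrix only countably many pairs (x, S) have x + S somewhere dense in
some T_p. As X is uncountable, some x \<in> X occurs in none of them. If a condition p forced
z \<in> x + [T], then T_p \<subseteq> x + T, making x + T dense in T_p; so no condition does.
Only clause (iv) of the G-matrix is needed.\<close>

definition forces_initial_segment :: "(seq \<times> (nat \<times> bool)) set \<Rightarrow> seq \<Rightarrow> seq \<Rightarrow> bool" where
  "forces_initial_segment N q \<sigma> \<longleftrightarrow> (\<forall>i<length \<sigma>. forces_bit N q i (\<sigma> ! i))"

definition forced_tree :: "(seq \<times> (nat \<times> bool)) set \<Rightarrow> seq \<Rightarrow> seq set" where
  "forced_tree N p = {\<sigma>. \<exists>q. cext q p \<and> forces_initial_segment N q \<sigma>}"

lemma cext_refl: "cext p p"
  unfolding cext_def by simp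

lemma cext_trans: "cext r q \<Longrightarrow> cext q p \<Longrightarrow> cext r p"
  unfolding cext_def by (meson prefix_order.trans)

lemma forces_bit_mono: "forces_bit N q n b \<Longrightarrow> cext r q \<Longrightarrow> forces_bit N r n b"
  unfolding forces_bit_def by (meson cext_trans)

lemma forces_initial_segment_mono:
  "forces_initial_segment N q \<sigma> \<Longrightarrow> cext r q \<Longrightarrow> forces_initial_segment N r \<sigma>"
  unfolding forces_initial_segment_def using forces_bit_mono by blast

lemma prefix_nth: "prefix \<tau> \<sigma> \<Longrightarrow> i < length \<tau> \<Longrightarrow> \<sigma> ! i = \<tau> ! i"
  by (auto simp: prefix_def nth_append)

lemma forces_initial_segment_prefix:
  "forces_initial_segment N q \<sigma> \<Longrightarrow> prefix \<tau> \<sigma> \<Longrightarrow> forces_initial_segment N q \<tau>"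
  unfolding forces_initial_segment_def
  by (metis prefix_nth prefix_length_le order_less_le_trans)

lemma forces_bit_unique:
  "name_real N \<Longrightarrow> forces_bit N q n b \<Longrightarrow> forces_bit N q n b' \<Longrightarrow> b = b'"
  unfolding name_real_def by (cases b; cases b'; auto)

lemma forces_initial_segment_nth:
  assumes "name_real N" "forces_initial_segment N q \<sigma>" "forces_bit N q n b" "n < length \<sigma>"
  shows "\<sigma> ! n = b"
  using assms forces_bit_unique unfolding forces_initial_segment_def by blast

lemma forces_initial_segment_snoc:
  assumes "name_real N" "forces_initial_segment N q \<sigma>"
  shows "\<exists>r b. cext r q \<and> forces_initial_segment N r (\<sigma> @ [b])"
proof -
  obtain r b where r: "cext r q" "forces_bit N r (length \<sigma>) b"
    using assms(1) unfolding name_real_def by blast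
  have "forces_initial_segment N r \<sigma>"
    using forces_initial_segment_mono[OF assms(2) r(1)] .
  with r have "forces_initial_segment N r (\<sigma> @ [b])"
    unfolding forces_initial_segment_def by (auto simp: nth_append less_Suc_eq)
  with r show ?thesis by blast
qed

lemma forces_initial_segment_extend:
  assumes "name_real N" "forces_initial_segment N q \<sigma>"
  shows "\<exists>r \<tau>. cext r q \<and> prefix \<sigma> \<tau> \<and> length \<tau> = length \<sigma> + k \<and> forces_initial_segment N r \<tau>"
proof (induction k)
  case 0
  show ?case using assms(2) cext_refl by fastforce
next
  case (Suc k)
  then obtain r \<tau> where r: "cext r q" "prefix \<sigma> \<tau>" "length \<tau> = length \<sigma> + k"
      "forces_initial_segment N r \<tau>"
    by blast
  obtain r' b where "cext r' r" "forces_initial_segment N r' (\<tau> @ [b])"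
    using forces_initial_segment_snoc[OF assms(1) r(4)] by blast
  with r show ?case
    by (intro exI[of _ r'] exI[of _ "\<tau> @ [b]"]) (auto intro: cext_trans prefix_order.trans)
qed

text \<open>z is forced to differ from the ground real "some extension of q forces z(n) = True".\<close>

lemma forces_new_splits:
  assumes "forces_new N"
  shows "\<exists>q1 q2 n. cext q1 q \<and> cext q2 q \<and> forces_bit N q1 n True \<and> forces_bit N q2 n False"
proof -
  define y where "y n \<longleftrightarrow> (\<exists>q'. cext q' q \<and> forces_bit N q' n True)" for n
  obtain q2 n where q2: "cext q2 q" "forces_bit N q2 n (\<not> y n)"
    using assms unfolding forces_new_def by blast
  have "y n"
  proof (rule ccontr)
    assume "\<not> y n"
    with q2 show False unfolding y_def by auto
  qed
  with q2 show ?thesis unfolding y_def by auto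
qed

lemma tree_unique_above_nonsplitting:
  assumes tree: "is_tree T"
    and no_split: "\<forall>\<tau>. prefix \<sigma> \<tau> \<longrightarrow> \<not> splitting T \<tau>"
    and "t1 \<in> T" "t2 \<in> T" "prefix \<sigma> t1" "prefix \<sigma> t2" "length t1 = length t2"
  shows "t1 = t2"
proof -
  obtain k where "length t1 = length \<sigma> + k"
    using prefix_length_le[OF \<open>prefix \<sigma> t1\<close>] le_Suc_ex by blast
  with assms(3-) show ?thesis
  proof (induction k arbitrary: t1 t2)
    case 0
    then show ?case by (auto simp: prefix_def)
  next
    case (Suc k)
    have t1: "t1 = butlast t1 @ [last t1]" and t2: "t2 = butlast t2 @ [last t2]"
      using Suc.prems by (auto intro!: append_butlast_last_id[symmetric])
    have below: "prefix (butlast t1) t1" "prefix (butlast t2) t2"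
      by (simp_all add: prefixeq_butlast)
    have in_T: "butlast t1 \<in> T" "butlast t2 \<in> T"
      using tree Suc.prems below unfolding is_tree_def by blast+
    have above: "prefix \<sigma> (butlast t1)" "prefix \<sigma> (butlast t2)"
      using Suc.prems by (auto simp: prefix_def butlast_append)
    have "butlast t1 = butlast t2"
      using Suc.IH[OF in_T above] Suc.prems by simp
    moreover have "\<not> splitting T (butlast t1)"
      using no_split above by blast
    ultimately have "last t1 = last t2"
      using in_T Suc.prems t1 t2 unfolding splitting_def by (metis (full_types))
    with \<open>butlast t1 = butlast t2\<close> t1 t2 show ?case by (simp only:)
  qed
qed

lemma Nil_in_forced_tree: "[] \<in> forced_tree N p"
  unfolding forced_tree_def forces_initial_segment_def using cext_refl by auto

lemma forced_tree_is_tree: "is_tree (forced_tree N p)"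
  unfolding is_tree_def
proof (intro conjI ballI allI impI)
  show "forced_tree N p \<noteq> {}" using Nil_in_forced_tree by blast
next
  fix \<sigma> \<tau> assume "\<sigma> \<in> forced_tree N p" "prefix \<tau> \<sigma>"
  then show "\<tau> \<in> forced_tree N p"
    unfolding forced_tree_def using forces_initial_segment_prefix by blast
qed

lemma forced_tree_perfect:
  assumes real: "name_real N" and new: "forces_new N"
  shows "perfect_tree (forced_tree N p)"
  unfolding perfect_tree_def
proof (intro conjI ballI forced_tree_is_tree)
  fix \<sigma> assume "\<sigma> \<in> forced_tree N p"
  then obtain q where q: "cext q p" "forces_initial_segment N q \<sigma>"
    unfolding forced_tree_def by blast
  obtain q1 q2 n where split: "cext q1 q" "cext q2 q"
      "forces_bit N q1 n True" "forces_bit N q2 n False"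
    using forces_new_splits[OF new] by blast
  define k where "k = Suc n"
  obtain r1 t1 where r1: "cext r1 q1" "prefix \<sigma> t1" "length t1 = length \<sigma> + k"
      "forces_initial_segment N r1 t1"
    using forces_initial_segment_extend[OF real forces_initial_segment_mono[OF q(2) split(1)]]
    by blast
  obtain r2 t2 where r2: "cext r2 q2" "prefix \<sigma> t2" "length t2 = length \<sigma> + k"
      "forces_initial_segment N r2 t2"
    using forces_initial_segment_extend[OF real forces_initial_segment_mono[OF q(2) split(2)]]
    by blast
  have t1: "t1 \<in> forced_tree N p" and t2: "t2 \<in> forced_tree N p"
    using r1(1,4) r2(1,4) split(1,2) q(1) cext_trans unfolding forced_tree_def by blast+
  have "t1 ! n \<noteq> t2 ! n"
    using forces_initial_segment_nth[OF real r1(4) forces_bit_mono[OF split(3) r1(1)]]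
      forces_initial_segment_nth[OF real r2(4) forces_bit_mono[OF split(4) r2(1)]]
      r1(3) r2(3) k_def by auto
  show "\<exists>\<tau>. prefix \<sigma> \<tau> \<and> splitting (forced_tree N p) \<tau>"
  proof (rule ccontr)
    assume "\<nexists>\<tau>. prefix \<sigma> \<tau> \<and> splitting (forced_tree N p) \<tau>"
    then have "\<forall>\<tau>. prefix \<sigma> \<tau> \<longrightarrow> \<not> splitting (forced_tree N p) \<tau>" by blast
    from tree_unique_above_nonsplitting[OF forced_tree_is_tree this t1 t2 r1(2) r2(2)]
    have "t1 = t2" using r1(3) r2(3) by simp
    with \<open>t1 ! n \<noteq> t2 ! n\<close> show False by simp
  qed
qed

lemma forced_tree_subset_if_not_forces_notin:
  assumes "\<not> forces_notin_branches N A"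
  obtains p where "forced_tree N p \<subseteq> A"
proof -
  from assms obtain p where "\<forall>q \<sigma>. cext q p \<and> forces_initial_segment N q \<sigma> \<longrightarrow> \<sigma> \<in> A"
    unfolding forces_notin_branches_def forces_initial_segment_def by blast
  then have "forced_tree N p \<subseteq> A"
    unfolding forced_tree_def by blast
  then show thesis by (rule that)
qed

lemma subset_gen_group: "X \<subseteq> gen_group X"
proof
  fix x assume "x \<in> X"
  then have "cadd x czero \<in> gen_group X" by (intro gen_group.step gen_group.zero)
  then show "x \<in> gen_group X" by (simp add: cadd_def czero_def)
qed

theorem lemma4p4:
  fixes g :: "'i::wellorder \<Rightarrow> nat \<Rightarrow> nat"
    and X :: "cantor set"
    and Tm :: "'i \<Rightarrow> seq set set"
    and N :: "(seq \<times> (nat \<times> bool)) set"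
  assumes "omega1_type TYPE('i)"
    and "b_family g"
    and "\<not> countable X"
    and "G_matrix g (gen_group X) Tm"
    and "name_real N"
    and "forces_new N"
  shows "\<exists>x\<in>X. \<forall>T\<in>\<Union>(range Tm). forces_notin_branches N (shift x T)"
proof -
  define dense_pairs where "dense_pairs p = {(x, S). x \<in> gen_group X \<and> S \<in> \<Union>(range Tm) \<and>
      somewhere_dense (shift x S) (forced_tree N p)}" for p
  have "countable (dense_pairs p)" for p
    using assms(4) forced_tree_perfect[OF assms(5,6), of p] unfolding G_matrix_def dense_pairs_def by blast
  then have "countable (\<Union>p. dense_pairs p)" by (intro countable_UN[of UNIV]) simp
  then have "countable (fst ` (\<Union>p. dense_pairs p))" by simp
  then obtain x where x: "x \<in> X" "x \<notin> fst ` (\<Union>p. dense_pairs p)"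
    using assms(3) by (metis countable_subset subsetI)
  have "forces_notin_branches N (shift x T)" if T: "T \<in> \<Union>(range Tm)" for T
  proof (rule ccontr)
    assume "\<not> forces_notin_branches N (shift x T)"
    then obtain p where "forced_tree N p \<subseteq> shift x T"
      by (rule forced_tree_subset_if_not_forces_notin)
    then have "somewhere_dense (shift x T) (forced_tree N p)"
      unfolding somewhere_dense_def using Nil_in_forced_tree by blast
    then have "(x, T) \<in> dense_pairs p"
      using subset_gen_group x(1) T unfolding dense_pairs_def by blast
    with x(2) show False by force
  qed
  with x(1) show ?thesis by blast
qed

end
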